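(* Let $\mathcal{S}\subseteq\mathbb{S}^{d-1}$ with $|\mathcal{S}|=n$, and let $\mathcal{D}$ be a (randomized) linear-space bucket data structure for the $(\alpha,\beta)$-ANN problem on $\mathcal{S}$ in which each point of $\mathcal{S}$ is stored in at most one bucket. Fix a query $q\in\mathbb{S}^{d-1}$ and suppose that each point of $\mathcal{S}\cap B(q,\alpha)$ lies in a bucket inspected by $q$ with probability $1-o(1)$, and that the expected number of points of $\mathcal{S}\setminus B(q,\beta)$ lying in buckets inspected by $q$ is at most $n^{\rho+o(1)}$. Let $\widehat{\mathrm{ans}}$ be the sum, over the buckets inspected by $q$, of the number of points stored in the bucket. Then with probability at least $2/3$, $$(1-o(1))|\mathcal{S}\cap B(q,\alpha)|\le\widehat{\mathrm{ans}}\le|\mathcal{S}\cap B(q,\beta)|+n^{\rho+o(1)}.$$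
   Context: $\mathbb{S}^{d-1}$ is the unit sphere in $\mathbb{R}^d$, $B(q,\alpha)=\{x\in\mathbb{S}^{d-1}:\langle q,x\rangle\ge\alpha\}$, $0\le\beta<\alpha<1$. A bucket data structure stores points of $\mathcal{S}$ in buckets (e.g. of a hash table); a query $q$ determines a set of buckets it inspects, and the $(\alpha,\beta)$-ANN query scans the points in these buckets. The counting version replaces each bucket by the number of points stored in it and returns the sum of these counts over the inspected buckets. Asymptotic notation is as $n\to\infty$. *)

theory Defs
  imports "HOL-Probability.Probability"
begin

text \<open>Points of R^d are represented as functions nat => real vanishing outside {..<d},
  so that the dimension d may depend on n.\<close>

definition dinner :: "nat \<Rightarrow> (nat \<Rightarrow> real) \<Rightarrow> (nat \<Rightarrow> real) \<Rightarrow> real" where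
  "dinner d x y = (\<Sum>i<d. x i * y i)"

definition usphere :: "nat \<Rightarrow> (nat \<Rightarrow> real) set" where
  "usphere d = {x. (\<forall>i\<ge>d. x i = 0) \<and> dinner d x x = 1}"

definition cap :: "nat \<Rightarrow> (nat \<Rightarrow> real) \<Rightarrow> real \<Rightarrow> (nat \<Rightarrow> real) set" where
  "cap d q a = {x \<in> usphere d. dinner d q x \<ge> a}"

definition inspected_points :: "('b \<Rightarrow> 'p set) \<Rightarrow> 'b set \<Rightarrow> 'p set" where
  "inspected_points bucket Ins = (\<Union>b\<in>Ins. bucket b)"

definition count_answer :: "('b \<Rightarrow> 'p set) \<Rightarrow> 'b set \<Rightarrow> nat" where
  "count_answer bucket Ins = (\<Sum>b\<in>Ins. card (bucket b))"

end

theory Submission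
  imports Defs "HOL-Real_Asymp.Real_Asymp"
begin

text \<open>Since every point is stored in at most one bucket, the counting answer is the number of
  distinct points in the inspected buckets, and these all lie in \<open>S\<close>. It is therefore at least the
  number of inspected near points and at most \<open>|S \<inter> B(q,\<beta>)|\<close> plus the number of inspected far
  points. Markov's inequality, applied to the number of missed near points (expected fraction at
  most \<open>\<epsilon>\<close>) and to the number of inspected far points (expectation at most \<open>K\<close>), makes each bound
  fail with probability at most \<open>1/6\<close> after the errors are scaled to \<open>6\<epsilon>\<close> and \<open>6K\<close>; the
  factor \<open>6\<close> is absorbed into the \<open>o(1)\<close> terms as \<open>n powr (log n 6) = 6\<close>. Neither the geometry
  of the caps nor the linear space bound plays a role.\<close>

lemma count_answer_eq_card_inspected_points:
  assumes "finite Ins" "\<And>b. b \<in> Ins \<Longrightarrow> finite (bucket b)" "disjoint_family_on bucket Ins"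
  shows "count_answer bucket Ins = card (inspected_points bucket Ins)"
  using card_UN_disjoint'[OF assms(3,2,1)]
  by (simp add: count_answer_def inspected_points_def)

lemma card_le_card_Int_add_card_Diff_Int:
  assumes "finite S" "X \<subseteq> S"
  shows "card X \<le> card (S \<inter> B) + card ((S - B) \<inter> X)"
proof -
  have "card X \<le> card ((S \<inter> B) \<union> ((S - B) \<inter> X))"
    using assms by (intro card_mono) auto
  also have "\<dots> \<le> card (S \<inter> B) + card ((S - B) \<inter> X)"
    by (rule card_Un_le)
  finally show ?thesis .
qed

context prob_space
begin

lemma card_Int_random_set_eq_sum_indicator:
  assumes "finite T" "\<omega> \<in> space M"
  shows "real (card (T \<inter> X \<omega>)) = (\<Sum>x\<in>T. indicator {\<omega>\<in>space M. x \<in> X \<omega>} \<omega>)"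
proof -
  have "(\<Sum>x\<in>T. indicator {\<omega>\<in>space M. x \<in> X \<omega>} \<omega>) = (\<Sum>x\<in>T. indicator (X \<omega>) x :: real)"
    using assms(2) by (intro sum.cong) (auto simp: indicator_def)
  also have "\<dots> = real (card (T \<inter> X \<omega>))"
    using assms(1) by (simp add: indicator_def sum.If_cases Int_def)
  finally show ?thesis ..
qed

lemma
  assumes "finite T" "\<And>x. x \<in> T \<Longrightarrow> {\<omega>\<in>space M. x \<in> X \<omega>} \<in> events"
  shows integrable_card_Int_random_set: "integrable M (\<lambda>\<omega>. real (card (T \<inter> X \<omega>)))"
    and expectation_card_Int_random_set:
      "expectation (\<lambda>\<omega>. real (card (T \<inter> X \<omega>))) = (\<Sum>x\<in>T. prob {\<omega>\<in>space M. x \<in> X \<omega>})"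
proof -
  let ?E = "\<lambda>x. {\<omega>\<in>space M. x \<in> X \<omega>}"
  have indicator_integrable: "integrable M (indicator (?E x) :: _ \<Rightarrow> real)" if "x \<in> T" for x
    using assms(2)[OF that] by (intro integrable_real_indicator) (auto simp: emeasure_eq_measure)
  have "integrable M (\<lambda>\<omega>. \<Sum>x\<in>T. indicator (?E x) \<omega> :: real)"
    using indicator_integrable by (rule Bochner_Integration.integrable_sum)
  then show "integrable M (\<lambda>\<omega>. real (card (T \<inter> X \<omega>)))"
    by (rule Bochner_Integration.integrable_cong[THEN iffD1, rotated 2])
      (simp_all add: card_Int_random_set_eq_sum_indicator[OF assms(1)])
  have "expectation (\<lambda>\<omega>. real (card (T \<inter> X \<omega>))) = expectation (\<lambda>\<omega>. \<Sum>x\<in>T. indicator (?E x) \<omega>)"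
    by (intro Bochner_Integration.integral_cong) (simp_all add: card_Int_random_set_eq_sum_indicator[OF assms(1)])
  also have "\<dots> = (\<Sum>x\<in>T. prob (?E x))"
    using indicator_integrable by (simp add: Bochner_Integration.integral_sum Int_absorb2)
  finally show "expectation (\<lambda>\<omega>. real (card (T \<inter> X \<omega>))) = (\<Sum>x\<in>T. prob (?E x))" .
qed

lemma prob_gt_mult_le_inverse:
  assumes "integrable M Y" "\<And>\<omega>. \<omega> \<in> space M \<Longrightarrow> 0 \<le> Y \<omega>" "expectation Y \<le> K" "K > 0" "c > 0"
  shows "prob {\<omega>\<in>space M. Y \<omega> > c * K} \<le> 1 / c"
proof -
  have "prob {\<omega>\<in>space M. Y \<omega> > c * K} \<le> prob {\<omega>\<in>space M. Y \<omega> \<ge> c * K}"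
    using borel_measurable_integrable[OF assms(1)] by (intro finite_measure_mono) auto
  also have "\<dots> \<le> expectation Y / (c * K)"
    using assms by (intro integral_Markov_inequality_measure[of _ _ "space M"]) auto
  also have "\<dots> \<le> K / (c * K)"
    using assms by (intro divide_right_mono) auto
  also have "\<dots> = 1 / c"
    using assms(4) by simp
  finally show ?thesis .
qed

lemma prob_card_Int_random_set_lower_tail:
  assumes "finite A" "\<And>x. x \<in> A \<Longrightarrow> {\<omega>\<in>space M. x \<in> X \<omega>} \<in> events"
    and "c > 0" "e > 0" "\<And>x. x \<in> A \<Longrightarrow> prob {\<omega>\<in>space M. x \<in> X \<omega>} \<ge> 1 - e"
  shows "prob {\<omega>\<in>space M. real (card (A \<inter> X \<omega>)) < (1 - c * e) * real (card A)} \<le> 1 / c"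
proof (cases "A = {}")
  case True
  then show ?thesis using \<open>c > 0\<close> by simp
next
  case False
  define a where "a = real (card A)"
  define missed where "missed = (\<lambda>\<omega>. a - real (card (A \<inter> X \<omega>)))"
  have "a > 0"
    using False \<open>finite A\<close> by (simp add: a_def card_gt_0_iff)
  have integrable: "integrable M missed"
    unfolding missed_def using integrable_card_Int_random_set[OF assms(1,2)] by simp
  have "(\<Sum>x\<in>A. 1 - e) \<le> (\<Sum>x\<in>A. prob {\<omega>\<in>space M. x \<in> X \<omega>})"
    using assms(5) by (rule sum_mono)
  moreover have "expectation missed = a - (\<Sum>x\<in>A. prob {\<omega>\<in>space M. x \<in> X \<omega>})"
    using integrable_card_Int_random_set[OF assms(1,2)] expectation_card_Int_random_set[OF assms(1,2)]
    by (simp add: missed_def prob_space)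
  ultimately have "expectation missed \<le> e * a"
    by (simp add: a_def algebra_simps)
  moreover have "0 \<le> missed \<omega>" for \<omega>
    using \<open>finite A\<close> by (simp add: missed_def a_def card_mono)
  ultimately have "prob {\<omega>\<in>space M. missed \<omega> > c * (e * a)} \<le> 1 / c"
    using integrable \<open>a > 0\<close> assms(3,4) by (intro prob_gt_mult_le_inverse) auto
  moreover have "missed \<omega> > c * (e * a) \<longleftrightarrow> real (card (A \<inter> X \<omega>)) < (1 - c * e) * real (card A)" for \<omega>
    by (auto simp: missed_def a_def algebra_simps)
  ultimately show ?thesis by simp
qed

lemma prob_card_random_set_bounds:
  assumes "finite S" "\<And>\<omega>. \<omega> \<in> space M \<Longrightarrow> X \<omega> \<subseteq> S"
    and point_events: "\<And>x. x \<in> S \<Longrightarrow> {\<omega>\<in>space M. x \<in> X \<omega>} \<in> events"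
    and "A \<subseteq> S" "e > 0" "\<And>x. x \<in> A \<Longrightarrow> prob {\<omega>\<in>space M. x \<in> X \<omega>} \<ge> 1 - e"
    and "K > 0" "expectation (\<lambda>\<omega>. real (card ((S - B) \<inter> X \<omega>))) \<le> K"
  shows "prob {\<omega>\<in>space M. (1 - 6 * e) * real (card A) \<le> real (card (X \<omega>))
                \<and> real (card (X \<omega>)) \<le> real (card (S \<inter> B)) + 6 * K} \<ge> 2 / 3"
proof -
  have events_subset: "\<And>x. x \<in> T \<Longrightarrow> {\<omega>\<in>space M. x \<in> X \<omega>} \<in> events" if "T \<subseteq> S" for T
    using point_events that by blast
  have fin: "finite A" "finite (S - B)"
    using \<open>finite S\<close> \<open>A \<subseteq> S\<close> finite_subset by auto
  have [measurable]: "(\<lambda>\<omega>. real (card (T \<inter> X \<omega>))) \<in> borel_measurable M" if "T \<subseteq> S" for T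
    using integrable_card_Int_random_set[OF finite_subset[OF that \<open>finite S\<close>] events_subset[OF that]]
    by measurable
  define miss where "miss = {\<omega>\<in>space M. real (card (A \<inter> X \<omega>)) < (1 - 6 * e) * real (card A)}"
  define far where "far = {\<omega>\<in>space M. real (card ((S - B) \<inter> X \<omega>)) > 6 * K}"
  \<comment> \<open>Stated with \<open>S \<inter> X \<omega>\<close> in place of \<open>X \<omega>\<close>, whose count is known to be measurable.\<close>
  define good where "good = {\<omega>\<in>space M. (1 - 6 * e) * real (card A) \<le> real (card (S \<inter> X \<omega>))
                \<and> real (card (S \<inter> X \<omega>)) \<le> real (card (S \<inter> B)) + 6 * K}"
  have [measurable]: "miss \<in> events" "far \<in> events" "good \<in> events"
    using \<open>A \<subseteq> S\<close> by (auto simp: miss_def far_def good_def)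
  have "prob miss \<le> 1 / 6"
    unfolding miss_def using assms(5,6) fin(1) events_subset[OF \<open>A \<subseteq> S\<close>]
    by (intro prob_card_Int_random_set_lower_tail) auto
  moreover have "prob far \<le> 1 / 6"
    unfolding far_def using assms(7,8) integrable_card_Int_random_set[OF fin(2) events_subset[of "S - B"]]
    by (intro prob_gt_mult_le_inverse) auto
  ultimately have "prob (space M - (miss \<union> far)) \<ge> 2 / 3"
    using measure_Un_le[of miss M far] by (simp add: prob_compl)
  moreover have "space M - (miss \<union> far) \<subseteq> good"
  proof
    fix \<omega> assume \<omega>: "\<omega> \<in> space M - (miss \<union> far)"
    then have "X \<omega> \<subseteq> S"
      using assms(2) by blast
    then have "card (A \<inter> X \<omega>) \<le> card (X \<omega>)" "card (X \<omega>) \<le> card (S \<inter> B) + card ((S - B) \<inter> X \<omega>)"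
      using \<open>finite S\<close> card_le_card_Int_add_card_Diff_Int by (auto intro: card_mono rev_finite_subset)
    then show "\<omega> \<in> good"
      using \<omega> \<open>X \<omega> \<subseteq> S\<close> by (auto simp: miss_def far_def good_def Int_absorb1)
  qed
  then have "prob (space M - (miss \<union> far)) \<le> prob good"
    by (intro finite_measure_mono) auto
  moreover have "good = {\<omega>\<in>space M. (1 - 6 * e) * real (card A) \<le> real (card (X \<omega>))
                \<and> real (card (X \<omega>)) \<le> real (card (S \<inter> B)) + 6 * K}"
    using assms(2) by (auto simp: good_def Int_absorb1)
  ultimately show ?thesis by simp
qed

lemma prob_count_answer_bounds:
  fixes bucket :: "'a \<Rightarrow> 'b \<Rightarrow> 'p set" and Bk Ins :: "'a \<Rightarrow> 'b set"
  defines "IP \<equiv> \<lambda>\<omega>. inspected_points (bucket \<omega>) (Ins \<omega>)"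
  assumes "finite S" "\<forall>\<omega>\<in>space M. finite (Bk \<omega>)"
    and "\<forall>\<omega>\<in>space M. \<forall>b\<in>Bk \<omega>. bucket \<omega> b \<subseteq> S"
    and "\<forall>\<omega>\<in>space M. disjoint_family_on (bucket \<omega>) (Bk \<omega>)"
    and "\<forall>\<omega>\<in>space M. Ins \<omega> \<subseteq> Bk \<omega>"
    and "\<forall>x\<in>S. {\<omega>\<in>space M. x \<in> IP \<omega>} \<in> events"
    and "A \<subseteq> S" "e > 0" "\<forall>x\<in>A. prob {\<omega>\<in>space M. x \<in> IP \<omega>} \<ge> 1 - e"
    and "K > 0" "expectation (\<lambda>\<omega>. real (card ((S - B) \<inter> IP \<omega>))) \<le> K"
  shows "prob {\<omega>\<in>space M. (1 - 6 * e) * real (card A) \<le> real (count_answer (bucket \<omega>) (Ins \<omega>))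
                \<and> real (count_answer (bucket \<omega>) (Ins \<omega>)) \<le> real (card (S \<inter> B)) + 6 * K} \<ge> 2 / 3"
proof -
  have IP_subset: "IP \<omega> \<subseteq> S" if "\<omega> \<in> space M" for \<omega>
    using assms(4,6) that by (auto simp: IP_def inspected_points_def)
  have "count_answer (bucket \<omega>) (Ins \<omega>) = card (IP \<omega>)" if \<omega>: "\<omega> \<in> space M" for \<omega>
  proof -
    have "finite (Ins \<omega>)"
      using assms(3,6) \<omega> rev_finite_subset by blast
    moreover have "finite (bucket \<omega> b)" if "b \<in> Ins \<omega>" for b
      using assms(2,4,6) \<omega> that rev_finite_subset by blast
    moreover have "disjoint_family_on (bucket \<omega>) (Ins \<omega>)"
      using assms(5,6) \<omega> disjoint_family_on_mono by blast
    ultimately show ?thesis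
      unfolding IP_def by (rule count_answer_eq_card_inspected_points)
  qed
  then have "{\<omega>\<in>space M. (1 - 6 * e) * real (card A) \<le> real (count_answer (bucket \<omega>) (Ins \<omega>))
                \<and> real (count_answer (bucket \<omega>) (Ins \<omega>)) \<le> real (card (S \<inter> B)) + 6 * K}
      = {\<omega>\<in>space M. (1 - 6 * e) * real (card A) \<le> real (card (IP \<omega>))
                \<and> real (card (IP \<omega>)) \<le> real (card (S \<inter> B)) + 6 * K}"
    by auto
  also have "2 / 3 \<le> prob \<dots>"
    using assms(2,7-12) IP_subset by (intro prob_card_random_set_bounds) auto
  finally show ?thesis .
qed

end

theorem lemma2:
  fixes d :: "nat \<Rightarrow> nat"
    and S :: "nat \<Rightarrow> (nat \<Rightarrow> real) set"
    and q :: "nat \<Rightarrow> (nat \<Rightarrow> real)"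
    and \<alpha> \<beta> \<rho> C :: real
    and M :: "nat \<Rightarrow> 'w measure"
    and Bk :: "nat \<Rightarrow> 'w \<Rightarrow> 'b set"
    and bucket :: "nat \<Rightarrow> 'w \<Rightarrow> 'b \<Rightarrow> (nat \<Rightarrow> real) set"
    and Ins :: "nat \<Rightarrow> 'w \<Rightarrow> 'b set"
  assumes "0 \<le> \<beta>" and "\<beta> < \<alpha>" and "\<alpha> < 1"
    and S: "\<forall>n. S n \<subseteq> usphere (d n) \<and> finite (S n) \<and> card (S n) = n"
    and q: "\<forall>n. q n \<in> usphere (d n)"
    and prob: "\<forall>n. prob_space (M n)"
    and linear_space: "\<forall>n. \<forall>\<omega>\<in>space (M n). finite (Bk n \<omega>) \<and> real (card (Bk n \<omega>)) \<le> C * real n"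
    and stored: "\<forall>n. \<forall>\<omega>\<in>space (M n). \<forall>b\<in>Bk n \<omega>. bucket n \<omega> b \<subseteq> S n"
    and at_most_one_bucket: "\<forall>n. \<forall>\<omega>\<in>space (M n). \<forall>b\<in>Bk n \<omega>. \<forall>b'\<in>Bk n \<omega>.
           b \<noteq> b' \<longrightarrow> bucket n \<omega> b \<inter> bucket n \<omega> b' = {}"
    and inspected: "\<forall>n. \<forall>\<omega>\<in>space (M n). Ins n \<omega> \<subseteq> Bk n \<omega>"
    and meas: "\<forall>n. \<forall>x\<in>S n.
           {\<omega> \<in> space (M n). x \<in> inspected_points (bucket n \<omega>) (Ins n \<omega>)} \<in> sets (M n)"
    and recall: "\<exists>\<epsilon>::nat \<Rightarrow> real. \<epsilon> \<longlonglongrightarrow> 0 \<and>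
           (\<forall>n. \<forall>x\<in>S n \<inter> cap (d n) (q n) \<alpha>.
              measure (M n) {\<omega> \<in> space (M n). x \<in> inspected_points (bucket n \<omega>) (Ins n \<omega>)} \<ge> 1 - \<epsilon> n)"
    and far: "\<exists>\<delta>::nat \<Rightarrow> real. \<delta> \<longlonglongrightarrow> 0 \<and>
           (\<forall>n. (\<integral>\<omega>. real (card ((S n - cap (d n) (q n) \<beta>) \<inter> inspected_points (bucket n \<omega>) (Ins n \<omega>))) \<partial>M n)
              \<le> real n powr (\<rho> + \<delta> n))"
  shows "\<exists>\<epsilon> \<delta> :: nat \<Rightarrow> real. \<epsilon> \<longlonglongrightarrow> 0 \<and> \<delta> \<longlonglongrightarrow> 0 \<and>
           (\<forall>\<^sub>F n in sequentially.
              measure (M n) {\<omega> \<in> space (M n).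
                 (1 - \<epsilon> n) * real (card (S n \<inter> cap (d n) (q n) \<alpha>)) \<le> real (count_answer (bucket n \<omega>) (Ins n \<omega>))
               \<and> real (count_answer (bucket n \<omega>) (Ins n \<omega>)) \<le> real (card (S n \<inter> cap (d n) (q n) \<beta>)) + real n powr (\<rho> + \<delta> n)}
              \<ge> 2/3)"
proof -
  obtain \<epsilon> :: "nat \<Rightarrow> real" where "\<epsilon> \<longlonglongrightarrow> 0" and recall_n: "\<And>n x. x \<in> S n \<inter> cap (d n) (q n) \<alpha> \<Longrightarrow>
      measure (M n) {\<omega> \<in> space (M n). x \<in> inspected_points (bucket n \<omega>) (Ins n \<omega>)} \<ge> 1 - \<epsilon> n"
    using recall by blast
  obtain \<delta> :: "nat \<Rightarrow> real" where "\<delta> \<longlonglongrightarrow> 0" and far_n: "\<And>n.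
      (\<integral>\<omega>. real (card ((S n - cap (d n) (q n) \<beta>) \<inter> inspected_points (bucket n \<omega>) (Ins n \<omega>))) \<partial>M n)
        \<le> real n powr (\<rho> + \<delta> n)"
    using far by blast
  \<comment> \<open>\<open>e\<close> dominates \<open>\<epsilon>\<close> and is positive, as the lower-tail bound requires.\<close>
  define e where "e n = \<bar>\<epsilon> n\<bar> + 1 / (real n + 1)" for n
  have "(\<lambda>n. 6 * e n) \<longlonglongrightarrow> 0"
    unfolding e_def using \<open>\<epsilon> \<longlonglongrightarrow> 0\<close>
    by (intro tendsto_mult_right_zero tendsto_add_zero tendsto_rabs_zero) (assumption, real_asymp)
  moreover have "(\<lambda>n. \<delta> n + log (real n) 6) \<longlonglongrightarrow> 0"
    using \<open>\<delta> \<longlonglongrightarrow> 0\<close> by (intro tendsto_add_zero) (assumption, real_asymp)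
  moreover have "measure (M n) {\<omega> \<in> space (M n).
      (1 - 6 * e n) * real (card (S n \<inter> cap (d n) (q n) \<alpha>)) \<le> real (count_answer (bucket n \<omega>) (Ins n \<omega>))
      \<and> real (count_answer (bucket n \<omega>) (Ins n \<omega>))
          \<le> real (card (S n \<inter> cap (d n) (q n) \<beta>)) + real n powr (\<rho> + (\<delta> n + log (real n) 6))} \<ge> 2 / 3"
    if "n \<ge> 2" for n
  proof -
    interpret prob_space "M n"
      using prob by blast
    have six: "real n powr (\<rho> + (\<delta> n + log (real n) 6)) = 6 * real n powr (\<rho> + \<delta> n)"
      using that by (simp add: powr_add)
    have "\<epsilon> n \<le> e n" "e n > 0"
      by (simp_all add: e_def add_increasing2 add_nonneg_pos)
    then show ?thesis
      unfolding six using that S linear_space stored at_most_one_bucket inspected meas far_n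
        order_trans[OF diff_left_mono recall_n]
      by (intro prob_count_answer_bounds[where Bk = "Bk n"]) (auto simp: disjoint_family_on_def)
  qed
  ultimately show ?thesis
    by (intro exI[of _ "\<lambda>n. 6 * e n"] exI[of _ "\<lambda>n. \<delta> n + log (real n) 6"] conjI
        eventually_sequentiallyI[of 2]) auto
qed

end
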